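(* Let $\nu$ be a measure on $\mathbb{R}^d$ with $\nu(\{0\})=0$. Then $\nu\in\mathfrak{M}_L^2(\mathbb{R}^d)$ if and only if $\nu^{(2)}\in\mathfrak{M}_L^1(\mathbb{R}^d)$, and in this case $\mathcal{A}_2(\nu)=\mathcal{A}_1(\nu^{(2)})$. Also $\nu\in\mathfrak{M}_L^1(\mathbb{R}^d)$ if and only if $\nu^{(1/2)}\in\mathfrak{M}_L^2(\mathbb{R}^d)$, and in this case $\mathcal{A}_1(\nu)=\mathcal{A}_2(\nu^{(1/2)})$.
   Context: A Lévy measure on $\mathbb{R}^d$ is a measure $\nu$ with $\nu(\{0\})=0$ and $\int(1\wedge|x|^2)\nu(\mathrm{d}x)<\infty$; their class is $\mathfrak{M}_L^2(\mathbb{R}^d)$, and $\mathfrak{M}_L^1(\mathbb{R}^d)$ is the class of Lévy measures with $\int(1\wedge|x|)\nu(\mathrm{d}x)<\infty$. For $s>0$ set $a_1(r;s)=2\pi^{-1}(s-r^2)^{-1/2}$ for $0<r<s^{1/2}$ and $0$ otherwise; $a_2(r;s)=2\pi^{-1}(s^2-r^2)^{-1/2}$ for $0<r<s$ and $0$ otherwise. For a measure $\nu$ on $\mathbb{R}^d$ with $\nu(\{0\})=0$ and $k=1,2$, $\mathcal{A}_k(\nu)(B)=\int_{\mathbb{R}^d\setminus\{0\}}\nu(\mathrm{d}x)\int_0^\infty a_k(r;|x|)1_B(rx/|x|)\,\mathrm{d}r$, $B$ Borel. For $p>0$, the $(p)$-transformation of such $\nu$ is the measure $\nu^{(p)}(B)=\int_{\mathbb{R}^d\setminus\{0\}}1_B(|x|^p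 x/|x|)\,\nu(\mathrm{d}x)$. *)

theory Defs
  imports "HOL-Analysis.Analysis"
begin

definition levy2 :: "'a::euclidean_space measure \<Rightarrow> bool" where
  "levy2 nu \<longleftrightarrow> sets nu = sets borel \<and> emeasure nu {0} = 0 \<and>
     (\<integral>\<^sup>+ x. ennreal (min 1 (norm x ^ 2)) \<partial>nu) < \<infinity>"

definition levy1 :: "'a::euclidean_space measure \<Rightarrow> bool" where
  "levy1 nu \<longleftrightarrow> sets nu = sets borel \<and> emeasure nu {0} = 0 \<and>
     (\<integral>\<^sup>+ x. ennreal (min 1 (norm x)) \<partial>nu) < \<infinity>"

definition a1 :: "real \<Rightarrow> real \<Rightarrow> real" where
  "a1 r s = (if 0 < r \<and> r < sqrt s then 2 / pi * (s - r\<^sup>2) powr (-1/2) else 0)"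

definition a2 :: "real \<Rightarrow> real \<Rightarrow> real" where
  "a2 r s = (if 0 < r \<and> r < s then 2 / pi * (s\<^sup>2 - r\<^sup>2) powr (-1/2) else 0)"

definition trA :: "(real \<Rightarrow> real \<Rightarrow> real) \<Rightarrow> 'a::euclidean_space measure \<Rightarrow> 'a measure" where
  "trA a nu = measure_of UNIV (sets borel)
     (\<lambda>B. \<integral>\<^sup>+ x. indicator (-{0}) x *
          (\<integral>\<^sup>+ r. indicator {0<..} r * ennreal (a r (norm x)) * indicator B (r *\<^sub>R (x /\<^sub>R norm x)) \<partial>lborel) \<partial>nu)"

definition A1 :: "'a::euclidean_space measure \<Rightarrow> 'a measure" where
  "A1 = trA a1"

definition A2 :: "'a::euclidean_space measure \<Rightarrow> 'a measure" where
  "A2 = trA a2"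

definition ptrans :: "real \<Rightarrow> 'a::euclidean_space measure \<Rightarrow> 'a measure" where
  "ptrans p nu = measure_of UNIV (sets borel)
     (\<lambda>B. \<integral>\<^sup>+ x. indicator (-{0}) x * indicator B (norm x powr p *\<^sub>R (x /\<^sub>R norm x)) \<partial>nu)"

end

theory Submission
  imports Defs
begin

text \<open>The map \<open>x \<mapsto> |x|^p x/|x|\<close> keeps directions and sends the radius \<open>s\<close> to
  \<open>s^p\<close>, and \<open>\<nu>^(p)\<close> is the image of \<open>\<nu>\<close> restricted to \<open>-{0}\<close> under it. Hence integrals
  of radial functions against \<open>\<nu>^(p)\<close> are those against \<open>\<nu>\<close> after the substitution
  \<open>s \<mapsto> s^p\<close>, which turns \<open>min 1 s\<close> into \<open>min 1 s^2\<close> for \<open>p = 2\<close> and back for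
  \<open>p = 1/2\<close>; and since \<open>a1(r; s^2) = a2(r; s)\<close>, the kernel integrals defining \<open>A2 \<nu>\<close> and
  \<open>A1 \<nu>^(2)\<close> agree set by set.\<close>

definition radial_power :: "real \<Rightarrow> 'a::euclidean_space \<Rightarrow> 'a" where
  "radial_power p x = norm x powr p *\<^sub>R (x /\<^sub>R norm x)"

lemma radial_power_measurable [measurable]: "radial_power p \<in> borel_measurable borel"
  unfolding radial_power_def by measurable

lemma radial_power_eq_0_iff [simp]: "radial_power p x = 0 \<longleftrightarrow> x = 0"
  by (simp add: radial_power_def)

lemma norm_radial_power [simp]: "norm (radial_power p x) = norm x powr p"
  by (cases "x = 0") (simp_all add: radial_power_def)

lemma direction_radial_power:
  assumes "x \<noteq> 0"
  shows "radial_power p x /\<^sub>R norm (radial_power p x) = x /\<^sub>R norm x"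
  using assms by (simp add: radial_power_def field_simps)

lemma ptrans_eq_distr:
  fixes nu :: "'a::euclidean_space measure"
  assumes nu: "sets nu = sets borel"
  shows "ptrans p nu = distr (density nu (indicator (-{0}))) borel (radial_power p)"
proof -
  let ?nu0 = "density nu (indicator (-{0}))"
  let ?R = "distr ?nu0 borel (radial_power p)"
  have T: "radial_power p \<in> measurable ?nu0 borel"
    using nu by (simp add: measurable_def space_borel)
  have "ptrans p nu = measure_of UNIV (sets borel) (emeasure ?R)"
    unfolding ptrans_def
  proof (rule measure_of_eq)
    fix B :: "'a set" assume "B \<in> sigma_sets UNIV (sets borel)"
    then have B: "B \<in> sets borel"
      by (metis sets.sigma_sets_eq space_borel)
    have "emeasure ?R B = emeasure ?nu0 (radial_power p -` B \<inter> space ?nu0)"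
      by (rule emeasure_distr[OF T B])
    also have "\<dots> = \<integral>\<^sup>+ x. indicator (-{0}) x * indicator (radial_power p -` B \<inter> space nu) x \<partial>nu"
      using nu B T by (subst emeasure_density) (auto simp: nn_integral_set_ennreal mult.commute)
    also have "\<dots> = \<integral>\<^sup>+ x. indicator (-{0}) x * indicator B (norm x powr p *\<^sub>R (x /\<^sub>R norm x)) \<partial>nu"
      by (auto intro!: nn_integral_cong simp: indicator_def radial_power_def)
    finally show "(\<integral>\<^sup>+ x. indicator (-{0}) x * indicator B (norm x powr p *\<^sub>R (x /\<^sub>R norm x)) \<partial>nu)
        = emeasure ?R B" ..
  qed simp
  also have "\<dots> = ?R"
    using measure_of_of_measure[of ?R] by simp
  finally show ?thesis .
qed

lemma sets_ptrans:
  fixes nu :: "'a::euclidean_space measure"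
  assumes "sets nu = sets borel"
  shows "sets (ptrans p nu) = sets borel"
  unfolding ptrans_eq_distr[OF assms] by simp

lemma nn_integral_ptrans:
  fixes nu :: "'a::euclidean_space measure"
  assumes nu: "sets nu = sets borel" and f: "f \<in> borel_measurable borel"
  shows "(\<integral>\<^sup>+ y. f y \<partial>ptrans p nu) = (\<integral>\<^sup>+ x. indicator (-{0}) x * f (radial_power p x) \<partial>nu)"
proof -
  have T: "radial_power p \<in> measurable (density nu (indicator (-{0}))) borel"
    using nu by (simp add: measurable_def space_borel)
  have nu_measurable: "borel_measurable nu = borel_measurable borel"
    by (rule measurable_cong_sets[OF nu refl])
  have ind: "indicator (-{0}) \<in> borel_measurable nu"
    unfolding nu_measurable by measurable
  have "(\<lambda>x. f (radial_power p x)) \<in> borel_measurable nu"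
    unfolding nu_measurable using f by measurable
  then show ?thesis
    using f unfolding ptrans_eq_distr[OF nu] by (simp add: nn_integral_distr[OF T] nn_integral_density[OF ind])
qed

lemma emeasure_ptrans_0:
  fixes nu :: "'a::euclidean_space measure"
  assumes "sets nu = sets borel"
  shows "emeasure (ptrans p nu) {0} = 0"
proof -
  have "emeasure (ptrans p nu) {0} = (\<integral>\<^sup>+ y. indicator {0} y \<partial>ptrans p nu)"
    using sets_ptrans[OF assms] by simp
  also have "\<dots> = (\<integral>\<^sup>+ x. indicator (-{0}) x * indicator {0} (radial_power p x) \<partial>nu)"
    by (rule nn_integral_ptrans[OF assms]) simp
  also have "\<dots> = (\<integral>\<^sup>+ x. 0 \<partial>nu)"
    by (intro nn_integral_cong) (simp add: indicator_def)
  finally show ?thesis by simp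
qed

lemma nn_integral_ptrans_radial:
  fixes nu :: "'a::euclidean_space measure"
  assumes "sets nu = sets borel" and g: "g \<in> borel_measurable borel" and "g 0 = 0"
  shows "(\<integral>\<^sup>+ y. g (norm y) \<partial>ptrans p nu) = (\<integral>\<^sup>+ x. g (norm x powr p) \<partial>nu)"
proof -
  have "(\<integral>\<^sup>+ y. g (norm y) \<partial>ptrans p nu) = (\<integral>\<^sup>+ x. indicator (-{0}) x * g (norm x powr p) \<partial>nu)"
    using g by (subst nn_integral_ptrans[OF assms(1)]) simp_all
  also have "\<dots> = (\<integral>\<^sup>+ x. g (norm x powr p) \<partial>nu)"
    using \<open>g 0 = 0\<close> by (intro nn_integral_cong) (simp add: indicator_def)
  finally show ?thesis .
qed

lemma levy2_iff_levy1_ptrans: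
  fixes nu :: "'a::euclidean_space measure"
  assumes "sets nu = sets borel" and "emeasure nu {0} = 0"
  shows "levy2 nu \<longleftrightarrow> levy1 (ptrans 2 nu)"
proof -
  have "(\<integral>\<^sup>+ y. ennreal (min 1 (norm y)) \<partial>ptrans 2 nu) = (\<integral>\<^sup>+ x. ennreal (min 1 (norm x powr 2)) \<partial>nu)"
    by (rule nn_integral_ptrans_radial[OF assms(1)]) simp_all
  also have "\<dots> = (\<integral>\<^sup>+ x. ennreal (min 1 (norm x ^ 2)) \<partial>nu)"
    by (simp add: powr_numeral)
  finally show ?thesis
    using assms sets_ptrans[OF assms(1)] emeasure_ptrans_0[OF assms(1)] unfolding levy1_def levy2_def by simp
qed

lemma levy1_iff_levy2_ptrans:
  fixes nu :: "'a::euclidean_space measure"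
  assumes "sets nu = sets borel" and "emeasure nu {0} = 0"
  shows "levy1 nu \<longleftrightarrow> levy2 (ptrans (1/2) nu)"
proof -
  have "(\<integral>\<^sup>+ y. ennreal (min 1 (norm y ^ 2)) \<partial>ptrans (1/2) nu)
      = (\<integral>\<^sup>+ x. ennreal (min 1 ((norm x powr (1/2)) ^ 2)) \<partial>nu)"
    by (rule nn_integral_ptrans_radial[OF assms(1)]) simp_all
  also have "\<dots> = (\<integral>\<^sup>+ x. ennreal (min 1 (norm x)) \<partial>nu)"
    by (simp add: powr_half_sqrt)
  finally show ?thesis
    using assms sets_ptrans[OF assms(1)] emeasure_ptrans_0[OF assms(1)] unfolding levy1_def levy2_def by simp
qed

lemma trA_integrand_measurable:
  assumes a: "case_prod a \<in> borel_measurable (borel \<Otimes>\<^sub>M borel)" and B: "B \<in> sets borel"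
  shows "(\<lambda>y::'a::euclidean_space. \<integral>\<^sup>+ r. indicator {0<..} r * ennreal (a r (norm y))
            * indicator B (r *\<^sub>R (y /\<^sub>R norm y)) \<partial>lborel) \<in> borel_measurable borel"
proof -
  have "(\<lambda>(y::'a, r::real). (r, norm y)) \<in> measurable (borel \<Otimes>\<^sub>M lborel) (borel \<Otimes>\<^sub>M borel)"
    by measurable
  from measurable_comp[OF this a]
  have "(\<lambda>(y::'a, r::real). a r (norm y)) \<in> borel_measurable (borel \<Otimes>\<^sub>M lborel)"
    by (simp add: comp_def case_prod_beta')
  with B have "(\<lambda>(y::'a, r). indicator {0<..} r * ennreal (a r (norm y))
      * indicator B (r *\<^sub>R (y /\<^sub>R norm y))) \<in> borel_measurable (borel \<Otimes>\<^sub>M lborel)"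
    by measurable
  then show ?thesis
    by (rule lborel.borel_measurable_nn_integral)
qed

lemma trA_ptrans:
  fixes nu :: "'a::euclidean_space measure"
  assumes nu: "sets nu = sets borel"
    and a: "case_prod a \<in> borel_measurable (borel \<Otimes>\<^sub>M borel)"
    and ab: "\<And>r s. s > 0 \<Longrightarrow> a r (s powr p) = b r s"
  shows "trA b nu = trA a (ptrans p nu)"
  unfolding trA_def
proof (rule measure_of_eq)
  fix B :: "'a set" assume "B \<in> sigma_sets UNIV (sets borel)"
  then have B: "B \<in> sets borel"
    by (metis sets.sigma_sets_eq space_borel)
  let ?K = "\<lambda>a y. \<integral>\<^sup>+ r. indicator {0<..} r * ennreal (a r (norm y)) * indicator B (r *\<^sub>R (y /\<^sub>R norm y)) \<partial>lborel"
  have "(\<integral>\<^sup>+ y. indicator (-{0}) y * ?K a y \<partial>ptrans p nu)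
      = (\<integral>\<^sup>+ x. indicator (-{0}) x * (indicator (-{0}) (radial_power p x) * ?K a (radial_power p x)) \<partial>nu)"
    using trA_integrand_measurable[OF a B] by (subst nn_integral_ptrans[OF nu]) simp_all
  also have "\<dots> = (\<integral>\<^sup>+ x. indicator (-{0}) x * ?K b x \<partial>nu)"
  proof (rule nn_integral_cong)
    fix x :: 'a
    show "indicator (-{0}) x * (indicator (-{0}) (radial_power p x) * ?K a (radial_power p x))
        = indicator (-{0}) x * ?K b x"
    proof (cases "x = 0")
      case False
      then have "?K a (radial_power p x) = ?K b x"
        unfolding direction_radial_power[OF False] using ab[of "norm x"] False by simp
      then show ?thesis using False by simp
    qed simp
  qed
  finally show "(\<integral>\<^sup>+ x. indicator (-{0}) x * ?K b x \<partial>nu)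
      = (\<integral>\<^sup>+ y. indicator (-{0}) y * ?K a y \<partial>ptrans p nu)" ..
qed simp

theorem proposition2p5:
  fixes nu :: "'a::euclidean_space measure"
  assumes "sets nu = sets borel" and "emeasure nu {0} = 0"
  shows "(levy2 nu \<longleftrightarrow> levy1 (ptrans 2 nu))
     \<and> (levy2 nu \<longrightarrow> A2 nu = A1 (ptrans 2 nu))
     \<and> (levy1 nu \<longleftrightarrow> levy2 (ptrans (1/2) nu))
     \<and> (levy1 nu \<longrightarrow> A1 nu = A2 (ptrans (1/2) nu))"
proof -
  have a1_measurable: "case_prod a1 \<in> borel_measurable (borel \<Otimes>\<^sub>M borel)"
    unfolding a1_def by measurable
  have a2_measurable: "case_prod a2 \<in> borel_measurable (borel \<Otimes>\<^sub>M borel)"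
    unfolding a2_def by measurable
  have "A2 nu = A1 (ptrans 2 nu)"
    unfolding A1_def A2_def
    by (rule trA_ptrans[OF assms(1) a1_measurable]) (simp add: a1_def a2_def)
  moreover have "A1 nu = A2 (ptrans (1/2) nu)"
    unfolding A1_def A2_def
    by (rule trA_ptrans[OF assms(1) a2_measurable]) (simp add: a1_def a2_def powr_half_sqrt)
  ultimately show ?thesis
    using levy2_iff_levy1_ptrans[OF assms] levy1_iff_levy2_ptrans[OF assms] by blast
qed

end
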